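(* Let $K$ be a finite field of characteristic $p$ and let $d$ be an integer with $\gcd(d,|K|-1)=1$ that is nondegenerate over $K$. Then there exist $a,b\in K^\times$ with $W_{K,d}(a)>0$ and $W_{K,d}(b)<0$.
   Context: $\psi_K(x)=\exp(2\pi i\,\mathrm{Tr}_{K/\mathbb{F}_p}(x)/p)$ is the canonical additive character of $K$, and for $a\in K$ the Weil sum is $W_{K,d}(a)=\sum_{x\in K}\psi_K(x^d+ax)$; these values are real numbers. $d$ is degenerate over $K$ if $d\equiv p^j\pmod{|K|-1}$ for some integer $j$, and nondegenerate otherwise. *)

theory Defs
  imports Complex_Main "HOL-Library.Cardinality" "HOL-Number_Theory.Cong"
begin

definition field_degree :: "'a::{finite,field} itself \<Rightarrow> nat" where
  "field_degree t = (THE n. CARD('a) = CHAR('a) ^ n)"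

definition abs_trace :: "'a::{finite,field} \<Rightarrow> 'a" where
  "abs_trace x = (\<Sum>j<field_degree (TYPE('a)). x ^ (CHAR('a) ^ j))"

definition trace_nat :: "'a::{finite,field} \<Rightarrow> nat" where
  "trace_nat x = (THE m. m < CHAR('a) \<and> of_nat m = abs_trace x)"

definition psi :: "'a::{finite,field} \<Rightarrow> complex" where
  "psi x = exp (2 * pi * \<i> * of_nat (trace_nat x) / of_nat CHAR('a))"

definition weil_sum :: "nat \<Rightarrow> 'a::{finite,field} \<Rightarrow> complex" where
  "weil_sum d a = (\<Sum>x\<in>(UNIV::'a set). psi (x ^ d + a * x))"

definition degenerate :: "'a::{finite,field} itself \<Rightarrow> nat \<Rightarrow> bool" where
  "degenerate t d = (\<exists>j. [d = CHAR('a) ^ j] (mod (CARD('a) - 1)))"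

end

theory Submission
  imports Defs "HOL-Computational_Algebra.Polynomial" "HOL-Computational_Algebra.Primes"
begin

text \<open>
  Write \<open>q = |K|\<close>. Since \<open>x \<mapsto> x\<^sup>d\<close> permutes \<open>K\<close> and \<open>d\<close> is odd unless \<open>p = 2\<close>,
  \<open>W(0) = 0\<close> and every \<open>W(a)\<close> is real. Orthogonality of \<open>\<psi>\<close> gives the moments
  \<open>\<Sum>\<^sub>a W(a) = q\<close> and \<open>\<Sum>\<^sub>a W(a)\<^sup>2 = q\<^sup>2\<close>, so some \<open>W(a)\<close>, \<open>a \<noteq> 0\<close>, is positive.
  If none were negative, \<open>0 \<le> W \<le> q\<close> and the two moments would force \<open>W(a) \<in> {0, q}\<close>, hence
  \<open>W(a) = q\<close> for some \<open>a \<noteq> 0\<close>, i.e. \<open>Tr(x\<^sup>d) = Tr(-a x)\<close> for all \<open>x\<close>. Comparing the coefficients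
  of \<open>x\<close> of both sides as polynomial functions (via power sums over \<open>K\<^sup>\<times>\<close>) gives
  \<open>-a\<close> on the right and \<open>0\<close> on the left, unless \<open>d p\<^sup>j \<equiv> 1 (mod q - 1)\<close> for some \<open>j\<close>,
  which would make \<open>d\<close> degenerate.
\<close>

section \<open>Finite fields\<close>

lemma prime_CHAR_finite_field: "prime CHAR('a::{finite,field})"
  by (rule prime_CHAR_semidom) (simp add: finite_imp_CHAR_pos)

lemma card_field_ge_2: "CARD('a::{finite,field}) \<ge> 2"
proof -
  have "card {0::'a, 1} \<le> CARD('a)" by (rule card_mono) auto
  thus ?thesis by simp
qed

lemma power_card_minus_1_eq_1:
  fixes x :: "'a::{finite,field}"
  assumes "x \<noteq> 0"
  shows "x ^ (CARD('a) - 1) = 1"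
proof -
  let ?U = "UNIV - {0::'a}"
  have "(\<Prod>y\<in>?U. y) = (\<Prod>y\<in>?U. x * y)"
    by (rule prod.reindex_bij_witness[of _ "\<lambda>y. x * y" "\<lambda>y. y / x"]) (use assms in auto)
  also have "\<dots> = x ^ (CARD('a) - 1) * (\<Prod>y\<in>?U. y)"
    by (simp add: prod.distrib card_Diff_singleton)
  finally show ?thesis
    by simp
qed

lemma power_card_eq_self: "(x::'a::{finite,field}) ^ CARD('a) = x"
proof (cases "x = 0")
  case False
  have "x ^ CARD('a) = x * x ^ (CARD('a) - 1)"
    using card_field_ge_2[where 'a='a] by (simp flip: power_Suc)
  thus ?thesis using power_card_minus_1_eq_1[OF False] by simp
qed simp

lemma power_mod_card_minus_1:
  fixes x :: "'a::{finite,field}"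
  assumes "x \<noteq> 0"
  shows "x ^ (m mod (CARD('a) - 1)) = x ^ m"
proof -
  have "x ^ m = (x ^ (CARD('a) - 1)) ^ (m div (CARD('a) - 1)) * x ^ (m mod (CARD('a) - 1))"
    by (simp flip: power_mult power_add)
  thus ?thesis using power_card_minus_1_eq_1[OF assms] by simp
qed

definition add_closed :: "'a::monoid_add set \<Rightarrow> bool" where
  "add_closed S \<longleftrightarrow> 0 \<in> S \<and> (\<forall>x\<in>S. \<forall>y\<in>S. x + y \<in> S)"

lemma add_closed_of_nat_mult:
  fixes S :: "'a::semiring_1 set"
  assumes "add_closed S" "x \<in> S"
  shows "of_nat k * x \<in> S"
  using assms by (induction k) (auto simp: add_closed_def distrib_right)

lemma add_closed_uminus:
  fixes S :: "'a::ring_1 set"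
  assumes "add_closed S" "x \<in> S" "CHAR('a) > 0"
  shows "- x \<in> S"
proof -
  have "- x = of_nat (CHAR('a) - 1) * x"
    using assms(3) by simp
  thus ?thesis using add_closed_of_nat_mult[OF assms(1,2)] by simp
qed

lemma add_closed_of_nat_mult_cancel:
  fixes S :: "'a::ring_1 set"
  assumes "add_closed S" "of_nat k * v \<in> S" "prime CHAR('a)" "\<not> CHAR('a) dvd k"
  shows "v \<in> S"
proof -
  have "coprime k CHAR('a)"
    using prime_imp_coprime[OF assms(3,4)] by (simp add: coprime_commute)
  from cong_solve_coprime_nat[OF this] obtain k' where "[k * k' = 1] (mod CHAR('a))"
    by auto
  hence "of_nat (k * k') = (1 :: 'a)"
    using of_nat_eq_iff_cong_CHAR[of "k * k'" 1, where 'a='a] by simp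
  moreover have "of_nat k' * (of_nat k * v) = of_nat (k * k') * v"
    by (metis mult.assoc mult.commute of_nat_mult)
  ultimately have "of_nat k' * (of_nat k * v) = v"
    by simp
  thus ?thesis using add_closed_of_nat_mult[OF assms(1,2), of k'] by simp
qed

lemma add_closed_extend:
  fixes S :: "'a::ring_1 set"
  assumes S: "add_closed S" and v: "v \<notin> S" and p: "prime CHAR('a)"
  defines "S' \<equiv> (\<lambda>(s, k). s + of_nat k * v) ` (S \<times> {..<CHAR('a)})"
  shows "add_closed S'" and "card S' = CHAR('a) * card S"
proof -
  let ?p = "CHAR('a)"
  have p0: "?p > 0" using p prime_gt_0_nat by blast
  show "add_closed S'"
    unfolding add_closed_def
  proof (intro conjI ballI)
    have "(0, 0) \<in> S \<times> {..<?p}" using S p0 by (simp add: add_closed_def)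
    thus "0 \<in> S'" unfolding S'_def by force
  next
    fix x y assume "x \<in> S'" "y \<in> S'"
    then obtain s1 k1 s2 k2 where
      s: "s1 \<in> S" "s2 \<in> S" and xy: "x = s1 + of_nat k1 * v" "y = s2 + of_nat k2 * v"
      unfolding S'_def by auto
    have "of_nat (k1 + k2) = (of_nat ((k1 + k2) mod ?p) :: 'a)"
      by (simp only: of_nat_eq_iff_cong_CHAR cong_mod_right cong_refl)
    hence "x + y = (s1 + s2) + of_nat ((k1 + k2) mod ?p) * v"
      unfolding xy by (metis add.assoc add.left_commute distrib_right of_nat_add)
    moreover have "s1 + s2 \<in> S" using S s by (simp add: add_closed_def)
    ultimately show "x + y \<in> S'" unfolding S'_def using p0 by force
  qed
  have same_multiple: "k1 = k2"
    if "s1 + of_nat k1 * v = s2 + of_nat k2 * v" "s1 \<in> S" "s2 \<in> S" "k2 \<le> k1" "k1 < ?p"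
    for s1 s2 k1 k2
  proof (rule ccontr)
    assume "k1 \<noteq> k2"
    hence "\<not> ?p dvd (k1 - k2)" using that(4,5) by (auto dest: dvd_imp_le)
    moreover have "of_nat (k1 - k2) * v \<in> S"
    proof -
      have "of_nat (k1 - k2) * v = s2 + - s1"
        using that(1,4) by (simp add: algebra_simps)
      also have "\<dots> \<in> S"
        using S add_closed_uminus[OF S that(2) p0] that(3) unfolding add_closed_def by blast
      finally show ?thesis .
    qed
    ultimately show False
      using add_closed_of_nat_mult_cancel[OF S _ p] v by blast
  qed
  have "inj_on (\<lambda>(s, k). s + of_nat k * v) (S \<times> {..<?p})"
  proof (rule inj_onI, clarify)
    fix s1 k1 s2 k2
    assume "s1 \<in> S" "k1 < ?p" "s2 \<in> S" "k2 < ?p" "s1 + of_nat k1 * v = s2 + of_nat k2 * v"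
    hence "k1 = k2" using same_multiple[of s1 k1 s2 k2] same_multiple[of s2 k2 s1 k1]
      by (cases "k2 \<le> k1") simp_all
    thus "s1 = s2 \<and> k1 = k2" using \<open>s1 + of_nat k1 * v = s2 + of_nat k2 * v\<close> by simp
  qed
  thus "card S' = ?p * card S"
    unfolding S'_def by (simp add: card_image card_cartesian_product)
qed

lemma card_add_closed_dvd_CHAR_power:
  fixes S :: "'a::{finite,field} set"
  assumes "add_closed S"
  shows "\<exists>j. CARD('a) = card S * CHAR('a) ^ j"
  using assms
proof (induction "CARD('a) - card S" arbitrary: S rule: less_induct)
  case less
  show ?case
  proof (cases "S = UNIV")
    case False
    then obtain v where v: "v \<notin> S" by auto
    define S' where "S' = (\<lambda>(s, k). s + of_nat k * v) ` (S \<times> {..<CHAR('a)})"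
    have S': "add_closed S'" "card S' = CHAR('a) * card S"
      using add_closed_extend[OF less.prems v prime_CHAR_finite_field] by (simp_all add: S'_def)
    have "card S > 0" using less.prems by (auto simp: add_closed_def card_gt_0_iff)
    moreover have "CHAR('a) \<ge> 2" using prime_CHAR_finite_field prime_ge_2_nat by blast
    ultimately have "card S < card S'" using S'(2) by simp
    moreover have "card S' \<le> CARD('a)" by (rule card_mono) auto
    ultimately obtain j where "CARD('a) = card S' * CHAR('a) ^ j"
      using less.hyps[OF _ S'(1)] by force
    thus ?thesis using S'(2) by (auto intro!: exI[of _ "Suc j"] simp: mult_ac)
  qed (auto intro: exI[of _ 0])
qed

lemma card_eq_CHAR_power_field_degree:
  "CARD('a::{finite,field}) = CHAR('a) ^ field_degree TYPE('a)"
proof -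
  have "add_closed {0::'a}" by (simp add: add_closed_def)
  then obtain n where n: "CARD('a) = CHAR('a) ^ n"
    using card_add_closed_dvd_CHAR_power by force
  moreover have "CHAR('a) \<ge> 2" using prime_CHAR_finite_field prime_ge_2_nat by blast
  ultimately have "field_degree TYPE('a) = n"
    unfolding field_degree_def by (intro the_equality) simp_all
  thus ?thesis using n by simp
qed

lemma field_degree_pos: "field_degree TYPE('a::{finite,field}) > 0"
  using card_eq_CHAR_power_field_degree[where 'a='a] card_field_ge_2[where 'a='a]
  by (cases "field_degree TYPE('a)") auto

lemma of_nat_card_field: "of_nat CARD('a) = (0 :: 'a::{finite,field})"
  using card_eq_CHAR_power_field_degree[where 'a='a] field_degree_pos[where 'a='a]
  by (simp add: of_nat_eq_0_iff_char_dvd)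

lemma card_le_degree_if_roots:
  fixes P :: "'a::{comm_ring_1,ring_no_zero_divisors} poly"
  assumes "P \<noteq> 0" "\<And>x. x \<in> A \<Longrightarrow> poly P x = 0"
  shows "card A \<le> degree P"
proof -
  have "card A \<le> card {x. poly P x = 0}"
    using assms poly_roots_finite by (intro card_mono) auto
  also have "\<dots> \<le> degree P" by (rule card_poly_roots_bound) fact
  finally show ?thesis .
qed

section \<open>The absolute trace\<close>

lemma abs_trace_add: "abs_trace (x + y) = abs_trace x + abs_trace (y::'a::{finite,field})"
  unfolding abs_trace_def
  by (simp add: freshmans_dream'[OF prime_CHAR_finite_field refl] sum.distrib)

lemma abs_trace_zero: "abs_trace (0::'a::{finite,field}) = 0"
  using abs_trace_add[of "0::'a" 0] by (metis add_cancel_left_right)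

lemma abs_trace_uminus: "abs_trace (- x) = - abs_trace (x::'a::{finite,field})"
  using abs_trace_add[of x "- x"] by (simp add: abs_trace_zero eq_neg_iff_add_eq_0 add.commute)

lemma abs_trace_power_CHAR: "abs_trace (x::'a::{finite,field}) ^ CHAR('a) = abs_trace x"
proof -
  let ?n = "field_degree TYPE('a)"
  define f where "f j = x ^ (CHAR('a) ^ j)" for j
  have "f ?n = f 0"
    using power_card_eq_self[of x] by (simp add: f_def flip: card_eq_CHAR_power_field_degree)
  have "abs_trace x ^ CHAR('a) = (\<Sum>j<?n. f j ^ CHAR('a))"
    unfolding abs_trace_def f_def by (rule freshmans_dream_sum[OF prime_CHAR_finite_field refl])
  also have "\<dots> = (\<Sum>j<?n. f (Suc j))"
    by (simp add: f_def mult.commute flip: power_mult)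
  also have "\<dots> = (\<Sum>j<?n. f j)"
    using sum.lessThan_Suc_shift[of f ?n] \<open>f ?n = f 0\<close> by (simp add: add.commute)
  finally show ?thesis unfolding abs_trace_def f_def .
qed

lemma of_nat_power_CHAR: "(of_nat m :: 'a::{finite,field}) ^ CHAR('a) = of_nat m"
proof (induction m)
  case (Suc m)
  thus ?case by (simp add: freshmans_dream[OF prime_CHAR_finite_field refl])
qed (simp add: prime_gt_0_nat prime_CHAR_finite_field)

lemma power_CHAR_eq_self_imp_of_nat:
  fixes y :: "'a::{finite,field}"
  assumes "y ^ CHAR('a) = y"
  shows "\<exists>m<CHAR('a). of_nat m = y"
proof (rule ccontr)
  let ?p = "CHAR('a)"
  assume not_prime_field: "\<not> ?thesis"
  have p2: "?p \<ge> 2" using prime_CHAR_finite_field prime_ge_2_nat by blast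
  define P :: "'a poly" where "P = monom 1 ?p - monom 1 1"
  have "coeff P ?p = 1" using p2 by (simp add: P_def)
  hence "P \<noteq> 0" by auto
  have "degree P \<le> ?p"
    unfolding P_def using p2 by (intro order.trans[OF degree_diff_le_max]) (simp add: degree_monom_eq)
  have inj: "inj_on (of_nat :: nat \<Rightarrow> 'a) {..<?p}"
    by (intro inj_onI) (simp add: of_nat_eq_iff_cong_CHAR cong_less_modulus_unique_nat)
  have "y \<notin> of_nat ` {..<?p}" using not_prime_field by auto
  hence "card (insert y (of_nat ` {..<?p})) = Suc ?p"
    using card_image[OF inj] by simp
  moreover have "card (insert y (of_nat ` {..<?p})) \<le> degree P"
    using \<open>P \<noteq> 0\<close> assms
    by (intro card_le_degree_if_roots) (auto simp: P_def poly_monom of_nat_power_CHAR)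
  ultimately show False using \<open>degree P \<le> ?p\<close> by simp
qed

lemma trace_nat_less: "trace_nat (x::'a::{finite,field}) < CHAR('a)"
  and of_nat_trace_nat: "of_nat (trace_nat x) = abs_trace x"
proof -
  have "\<exists>!m. m < CHAR('a) \<and> of_nat m = abs_trace x"
    using power_CHAR_eq_self_imp_of_nat[OF abs_trace_power_CHAR]
    by (metis of_nat_eq_iff_cong_CHAR cong_less_modulus_unique_nat)
  from theI'[OF this] show "trace_nat x < CHAR('a)" "of_nat (trace_nat x) = abs_trace x"
    unfolding trace_nat_def by simp_all
qed

lemma abs_trace_nonzero_exists: "\<exists>x::'a::{finite,field}. abs_trace x \<noteq> 0"
proof (rule ccontr)
  let ?p = "CHAR('a)" and ?n = "field_degree TYPE('a)"
  assume trace_zero: "\<not> ?thesis"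
  have p2: "?p \<ge> 2" using prime_CHAR_finite_field prime_ge_2_nat by blast
  have n: "?n \<ge> 1" using field_degree_pos[where 'a='a] by simp
  define P :: "'a poly" where "P = (\<Sum>j<?n. monom 1 (?p ^ j))"
  have "coeff P (?p ^ (?n - 1)) = (\<Sum>j<?n. if j = ?n - 1 then 1 else 0)"
    unfolding P_def coeff_sum coeff_monom using p2 by (intro sum.cong) auto
  hence "P \<noteq> 0" using n by auto
  have "poly P z = abs_trace z" for z
    by (simp add: P_def poly_sum poly_monom abs_trace_def)
  hence "CARD('a) \<le> degree P"
    using \<open>P \<noteq> 0\<close> trace_zero by (intro card_le_degree_if_roots) auto
  moreover have "degree P \<le> ?p ^ (?n - 1)"
    unfolding P_def
  proof (intro degree_sum_le)
    fix j assume "j \<in> {..<?n}"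
    hence "?p ^ j \<le> ?p ^ (?n - 1)" using p2 by (intro power_increasing) auto
    thus "degree (monom (1::'a) (?p ^ j)) \<le> ?p ^ (?n - 1)" by (simp add: degree_monom_eq)
  qed simp
  moreover have "?p ^ (?n - 1) < CARD('a)"
    using p2 n by (simp add: card_eq_CHAR_power_field_degree power_strict_increasing)
  ultimately show False by simp
qed

section \<open>The canonical additive character\<close>

lemma psi_eq_cis: "psi (x::'a::{finite,field}) = cis (2 * pi * trace_nat x / CHAR('a))"
  by (simp add: psi_def cis_conv_exp mult_ac)

lemma cis_two_pi_div_mod:
  fixes k p :: nat
  assumes "p > 0"
  shows "cis (2 * pi * k / p) = cis (2 * pi * (k mod p) / p)"
proof -
  have "real k = real (k mod p) + real p * real (k div p)"
    by (simp flip: of_nat_mult of_nat_add)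
  hence "2 * pi * k / p = 2 * pi * (k mod p) / p + 2 * pi * (k div p)"
    using assms by (simp add: field_simps)
  thus ?thesis by (simp add: cis_mult[symmetric])
qed

lemma psi_add: "psi (x + y) = psi x * psi (y::'a::{finite,field})"
proof -
  let ?p = "CHAR('a)"
  have p: "?p > 0" using prime_CHAR_finite_field prime_gt_0_nat by blast
  have "of_nat (trace_nat (x + y)) = (of_nat (trace_nat x + trace_nat y) :: 'a)"
    by (simp add: of_nat_trace_nat abs_trace_add)
  hence "trace_nat (x + y) mod ?p = (trace_nat x + trace_nat y) mod ?p"
    by (simp only: of_nat_eq_iff_cong_CHAR cong_def)
  have "psi x * psi y = cis (2 * pi * (trace_nat x + trace_nat y) / ?p)"
    by (simp add: psi_eq_cis cis_mult add_divide_distrib distrib_left)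
  also have "\<dots> = cis (2 * pi * ((trace_nat x + trace_nat y) mod ?p) / ?p)"
    by (rule cis_two_pi_div_mod[OF p])
  also have "\<dots> = psi (x + y)"
    unfolding psi_eq_cis \<open>trace_nat (x + y) mod ?p = _\<close>[symmetric]
    by (rule cis_two_pi_div_mod[OF p, symmetric])
  finally show ?thesis ..
qed

lemma psi_zero: "psi (0::'a::{finite,field}) = 1"
  using psi_add[of "0::'a" 0] by (simp add: psi_eq_cis)

lemma norm_psi: "norm (psi (x::'a::{finite,field})) = 1"
  by (simp add: psi_eq_cis)

lemma psi_uminus: "psi (- x) = cnj (psi (x::'a::{finite,field}))"
proof -
  have "psi x * psi (- x) = 1" using psi_add[of x "- x"] by (simp add: psi_zero)
  moreover have "psi x * cnj (psi x) = 1"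
    using complex_norm_square[of "psi x"] by (simp add: norm_psi)
  ultimately show ?thesis by (metis mult_cancel_left mult_zero_left zero_neq_one)
qed

lemma psi_diff: "psi (x - y) = psi x * cnj (psi (y::'a::{finite,field}))"
  using psi_add[of x "- y"] by (simp add: psi_uminus)

lemma abs_trace_eq_0_if_psi_eq_1:
  assumes "psi (x::'a::{finite,field}) = 1"
  shows "abs_trace x = 0"
proof -
  let ?p = "CHAR('a)" and ?t = "trace_nat x"
  have p: "?p > 0" using prime_CHAR_finite_field prime_gt_0_nat by blast
  have "cos (2 * pi * ?t / ?p) = 1" using arg_cong[OF assms, of Re] by (simp add: psi_eq_cis)
  then obtain k :: int where "2 * pi * ?t / ?p = k * 2 * pi" by (auto simp: cos_one_2pi_int)
  hence "real ?t = k * ?p" using p by (simp add: field_simps)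
  hence "int ?t = k * int ?p" by (metis of_int_eq_iff of_int_of_nat_eq)
  hence "?p dvd ?t" by (metis dvd_triv_right int_dvd_int_iff)
  hence "?t = 0" using trace_nat_less[of x] by (auto dest: nat_dvd_not_less)
  thus ?thesis using of_nat_trace_nat[of x] by simp
qed

lemma sum_psi_mult:
  fixes c :: "'a::{finite,field}"
  shows "(\<Sum>x\<in>UNIV. psi (c * x)) = (if c = 0 then of_nat CARD('a) else 0)"
proof (cases "c = 0")
  case False
  obtain y :: 'a where "abs_trace y \<noteq> 0" using abs_trace_nonzero_exists by blast
  hence "psi y \<noteq> 1" using abs_trace_eq_0_if_psi_eq_1 by blast
  let ?S = "\<Sum>x\<in>UNIV. psi (c * x)"
  have "?S = (\<Sum>x\<in>UNIV. psi (c * (x + y / c)))"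
    by (rule sum.reindex_bij_witness[of _ "\<lambda>x. x + y / c" "\<lambda>x. x - y / c"]) auto
  also have "\<dots> = ?S * psi y"
    using False by (simp add: distrib_left psi_add sum_distrib_right)
  finally have "?S * (1 - psi y) = 0" by (simp add: algebra_simps)
  thus ?thesis using \<open>psi y \<noteq> 1\<close> False by simp
qed (simp add: psi_zero)

section \<open>Power sums\<close>

lemma exists_power_ne_1:
  assumes "\<not> (CARD('a::{finite,field}) - 1) dvd m"
  shows "\<exists>t::'a. t \<noteq> 0 \<and> t ^ m \<noteq> 1"
proof (rule ccontr)
  let ?U = "UNIV - {0::'a}" and ?r = "m mod (CARD('a) - 1)"
  assume "\<not> ?thesis"
  hence roots: "t ^ ?r = 1" if "t \<in> ?U" for t
    using that power_mod_card_minus_1[of t m] by auto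
  have "?r > 0" using assms by (simp add: mod_eq_0_iff_dvd flip: neq0_conv)
  have "?r < CARD('a) - 1" using card_field_ge_2[where 'a='a] by simp
  define P :: "'a poly" where "P = monom 1 ?r - 1"
  have "coeff P 0 = -1" using \<open>?r > 0\<close> by (simp add: P_def)
  hence "P \<noteq> 0" by auto
  have "degree P \<le> ?r"
    unfolding P_def by (intro order.trans[OF degree_diff_le_max]) (simp add: degree_monom_eq)
  moreover have "poly P t = 0" if "t \<in> ?U" for t
    using roots[OF that] by (simp add: P_def poly_monom)
  hence "card ?U \<le> degree P" using \<open>P \<noteq> 0\<close> by (intro card_le_degree_if_roots)
  ultimately show False using \<open>?r < CARD('a) - 1\<close> by (simp add: card_Diff_singleton)
qed

lemma sum_nonzero_power:
  "(\<Sum>x\<in>UNIV - {0}. (x::'a::{finite,field}) ^ m) = (if (CARD('a) - 1) dvd m then -1 else 0)"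
proof (cases "(CARD('a) - 1) dvd m")
  case True
  hence "(\<Sum>x\<in>UNIV - {0}. (x::'a) ^ m) = (\<Sum>x\<in>UNIV - {0::'a}. 1)"
    by (intro sum.cong refl) (metis DiffE insertI1 power_0 power_mod_card_minus_1 mod_eq_0_iff_dvd)
  also have "\<dots> = of_nat (CARD('a) - 1)" by (simp add: card_Diff_singleton)
  also have "\<dots> = -1" using card_field_ge_2[where 'a='a] by (simp add: of_nat_card_field)
  finally show ?thesis using True by simp
next
  case False
  then obtain t :: 'a where t: "t \<noteq> 0" "t ^ m \<noteq> 1" using exists_power_ne_1 by blast
  let ?S = "\<Sum>x\<in>UNIV - {0::'a}. x ^ m"
  have "?S = (\<Sum>x\<in>UNIV - {0}. (t * x) ^ m)"
    by (rule sum.reindex_bij_witness[of _ "\<lambda>x. t * x" "\<lambda>x. x / t"]) (use t in auto)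
  also have "\<dots> = t ^ m * ?S" by (simp add: power_mult_distrib sum_distrib_left)
  finally have "?S * (1 - t ^ m) = 0" by (simp add: algebra_simps)
  thus ?thesis using t False by simp
qed

lemma sum_nonzero_power_mult_abs_trace:
  fixes c :: "'a::{finite,field}"
  shows "(\<Sum>x\<in>UNIV - {0}. x ^ m * abs_trace (c * x ^ e))
    = (\<Sum>j<field_degree TYPE('a). c ^ CHAR('a) ^ j * (\<Sum>x\<in>UNIV - {0}. x ^ (m + e * CHAR('a) ^ j)))"
proof -
  have "(\<Sum>x\<in>UNIV - {0}. x ^ m * abs_trace (c * x ^ e))
      = (\<Sum>x\<in>UNIV - {0}. \<Sum>j<field_degree TYPE('a). c ^ CHAR('a) ^ j * x ^ (m + e * CHAR('a) ^ j))"
    unfolding abs_trace_def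
    by (simp add: sum_distrib_left power_mult_distrib power_add power_mult mult.left_commute)
  also have "\<dots> = (\<Sum>j<field_degree TYPE('a). c ^ CHAR('a) ^ j * (\<Sum>x\<in>UNIV - {0}. x ^ (m + e * CHAR('a) ^ j)))"
    by (subst sum.swap) (simp add: sum_distrib_left)
  finally show ?thesis .
qed

section \<open>Degenerate exponents\<close>

lemma dvd_pred_add_iff_cong:
  fixes n e :: nat
  assumes "n > 0"
  shows "n dvd (n - 1 + e) \<longleftrightarrow> [e = 1] (mod n)"
proof -
  have "n dvd (n - 1 + e) \<longleftrightarrow> [n - 1 + e + 1 = 0 + 1] (mod n)"
    by (simp only: cong_add_rcancel_nat cong_0_iff)
  also have "n - 1 + e + 1 = e + n" using assms by simp
  finally show ?thesis by (simp add: cong_def)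
qed

lemma cong_CHAR_power_1_iff:
  assumes "j < field_degree TYPE('a::{finite,field})"
  shows "[CHAR('a) ^ j = 1] (mod CARD('a) - 1) \<longleftrightarrow> j = 0"
proof
  assume cong: "[CHAR('a) ^ j = 1] (mod CARD('a) - 1)"
  have "1 \<le> CHAR('a) ^ j"
    using prime_gt_0_nat[OF prime_CHAR_finite_field[where 'a='a]] by simp
  hence "(CARD('a) - 1) dvd (CHAR('a) ^ j - 1)"
    using cong by (simp add: cong_altdef_nat)
  moreover have "CHAR('a) ^ j < CARD('a)"
    unfolding card_eq_CHAR_power_field_degree
    using assms prime_gt_1_nat[OF prime_CHAR_finite_field] by (rule power_strict_increasing)
  hence "CHAR('a) ^ j - 1 < CARD('a) - 1"
    using \<open>1 \<le> CHAR('a) ^ j\<close> by (intro diff_less_mono)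
  ultimately have "CHAR('a) ^ j = 1"
    using \<open>1 \<le> CHAR('a) ^ j\<close> nat_dvd_not_less[of "CHAR('a) ^ j - 1"] by fastforce
  thus "j = 0" using prime_CHAR_finite_field[where 'a='a] by (simp add: prime_gt_1_nat)
qed simp

lemma degenerate_if_cong_mult_CHAR_power:
  assumes "[d * CHAR('a::{finite,field}) ^ j = 1] (mod CARD('a) - 1)"
    and "j \<le> field_degree TYPE('a)"
  shows "degenerate TYPE('a) d"
proof -
  let ?m = "CARD('a) - 1" and ?k = "field_degree TYPE('a) - j"
  have "[?m + 1 = 0 + 1] (mod ?m)"
    by (simp only: cong_add_rcancel_nat cong_0_iff dvd_refl)
  hence "[CARD('a) = 1] (mod ?m)"
    using card_field_ge_2[where 'a='a] by simp
  hence "[d * 1 = d * CARD('a)] (mod ?m)"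
    by (intro cong_mult cong_refl) (simp add: cong_sym_eq)
  also have "d * CARD('a) = d * CHAR('a) ^ j * CHAR('a) ^ ?k"
    using assms(2) by (simp add: card_eq_CHAR_power_field_degree mult.assoc flip: power_add)
  also have "[\<dots> = 1 * CHAR('a) ^ ?k] (mod ?m)"
    using assms(1) by (rule cong_mult[OF _ cong_refl])
  finally show ?thesis unfolding degenerate_def by auto
qed

lemma degenerate_if_abs_trace_power_eq_linear:
  fixes b :: "'a::{finite,field}"
  assumes "b \<noteq> 0" and trace_eq: "\<And>x. abs_trace (x ^ d) = abs_trace (b * x)"
  shows "degenerate TYPE('a) d"
proof (rule ccontr)
  assume nondeg: "\<not> degenerate TYPE('a) d"
  let ?q = "CARD('a)" and ?p = "CHAR('a)" and ?n = "field_degree TYPE('a)"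
  \<comment> \<open>\<open>T c e\<close> is minus the coefficient of \<open>x\<close> in \<open>Tr(c x\<^sup>e)\<close> reduced modulo \<open>x\<^sup>q - x\<close>.\<close>
  define T where "T c e = (\<Sum>x\<in>UNIV - {0}. x ^ (?q - 2) * abs_trace (c * x ^ e))" for c :: 'a and e
  have "?q - 1 > 0" and q_minus_2: "?q - 2 = (?q - 1) - 1" using card_field_ge_2[where 'a='a] by auto
  have "(?q - 1) dvd (?q - 2 + e) \<longleftrightarrow> [e = 1] (mod ?q - 1)" for e
    unfolding q_minus_2 using \<open>?q - 1 > 0\<close> by (rule dvd_pred_add_iff_cong)
  hence power_sum: "(\<Sum>x\<in>UNIV - {0}. (x::'a) ^ (?q - 2 + e)) = (if [e = 1] (mod ?q - 1) then -1 else 0)"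
    for e by (simp only: sum_nonzero_power)
  have "T 1 d = (\<Sum>j<?n. if [d * ?p ^ j = 1] (mod ?q - 1) then -1 else 0)"
    unfolding T_def sum_nonzero_power_mult_abs_trace power_sum by simp
  also have "\<dots> = 0"
    using nondeg degenerate_if_cong_mult_CHAR_power[where 'a='a]
    by (intro sum.neutral) (auto simp: less_imp_le)
  finally have "T 1 d = 0" .
  have "T b 1 = (\<Sum>j<?n. b ^ ?p ^ j * (if j = 0 then -1 else 0))"
    unfolding T_def sum_nonzero_power_mult_abs_trace power_sum
    by (intro sum.cong refl) (simp only: lessThan_iff mult_1 cong_CHAR_power_1_iff)
  also have "\<dots> = - b"
    using field_degree_pos[where 'a='a] by (simp add: if_distrib cong: if_cong)
  finally have "T b 1 = - b" .
  moreover have "T 1 d = T b 1" unfolding T_def using trace_eq by simp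
  ultimately show False using \<open>T 1 d = 0\<close> \<open>b \<noteq> 0\<close> by simp
qed

section \<open>Weil sums\<close>

lemma card_ge_3_if_nondegenerate:
  assumes "\<not> degenerate TYPE('a::{finite,field}) d"
  shows "CARD('a) \<ge> 3"
proof (rule ccontr)
  assume "\<not> CARD('a) \<ge> 3"
  hence "CARD('a) - 1 = 1" using card_field_ge_2[where 'a='a] by simp
  hence "degenerate TYPE('a) d" unfolding degenerate_def by (simp add: cong_def)
  thus False using assms by contradiction
qed

lemma bij_power_if_coprime:
  assumes "coprime d (CARD('a::{finite,field}) - 1)" and "d > 0"
  shows "bij (\<lambda>x::'a. x ^ d)"
proof -
  obtain e where e: "[d * e = 1] (mod CARD('a) - 1)"
    using cong_solve_coprime_nat[OF assms(1)] by auto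
  have "x = y" if "x ^ d = y ^ d" for x y :: 'a
  proof (cases "x = 0 \<or> y = 0")
    case False
    have "z ^ (d * e) = z" if "z \<noteq> 0" for z :: 'a
      using power_mod_card_minus_1[OF that, of "d * e"] power_mod_card_minus_1[OF that, of 1] e
      by (simp add: cong_def)
    thus ?thesis using False \<open>x ^ d = y ^ d\<close> by (metis power_mult)
  qed (use \<open>x ^ d = y ^ d\<close> \<open>d > 0\<close> in \<open>auto simp: power_0_left\<close>)
  hence "inj (\<lambda>x::'a. x ^ d)" by (intro injI)
  thus ?thesis by (simp add: bij_def finite_UNIV_inj_surj)
qed

lemma power_uminus_if_coprime:
  assumes "coprime d (CARD('a::{finite,field}) - 1)"
  shows "(- x) ^ d = - (x ^ d :: 'a)"
proof (cases "CHAR('a) = 2")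
  case True
  thus ?thesis by (simp add: uminus_CHAR_2)
next
  case False
  hence "odd CHAR('a)"
    using False prime_ge_2_nat[OF prime_CHAR_finite_field[where 'a='a]]
    by (intro prime_odd_nat[OF prime_CHAR_finite_field]) simp
  hence "even (CARD('a) - 1)" by (simp add: card_eq_CHAR_power_field_degree)
  hence "odd d" using assms by auto
  thus ?thesis by simp
qed

lemma weil_sum_zero:
  assumes "coprime d (CARD('a::{finite,field}) - 1)" and "d > 0"
  shows "weil_sum d (0::'a) = 0"
proof -
  have "weil_sum d (0::'a) = (\<Sum>x\<in>UNIV. psi (x::'a))"
    unfolding weil_sum_def
    using sum.reindex_bij_betw[OF bij_power_if_coprime[OF assms], of psi] by simp
  thus ?thesis using sum_psi_mult[of "1::'a"] by simp
qed

lemma weil_sum_real: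
  assumes "coprime d (CARD('a::{finite,field}) - 1)"
  shows "weil_sum d (a::'a) \<in> \<real>"
proof -
  have "cnj (weil_sum d a) = (\<Sum>x\<in>UNIV. psi (- (x ^ d + a * x)))"
    unfolding weil_sum_def by (simp flip: psi_uminus)
  also have "\<dots> = (\<Sum>x\<in>UNIV. psi (- ((- x) ^ d + a * (- x))))"
    by (rule sum.reindex_bij_witness[of _ uminus uminus]) auto
  also have "\<dots> = weil_sum d a"
    unfolding weil_sum_def power_uminus_if_coprime[OF assms] by (simp add: add.commute)
  finally show ?thesis by (simp add: Reals_cnj_iff)
qed

lemma sum_weil_sum:
  assumes "d > 0"
  shows "(\<Sum>a\<in>UNIV. weil_sum d (a::'a::{finite,field})) = of_nat CARD('a)"
proof -
  have "(\<Sum>a\<in>UNIV. weil_sum d (a::'a)) = (\<Sum>x\<in>UNIV. psi (x ^ d) * (\<Sum>a\<in>UNIV. psi (x * (a::'a))))"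
    unfolding weil_sum_def by (subst sum.swap) (simp add: psi_add sum_distrib_left mult.commute)
  also have "\<dots> = psi ((0::'a) ^ d) * of_nat CARD('a)"
    by (simp add: sum_psi_mult if_distrib cong: if_cong)
  finally show ?thesis using assms by (simp add: psi_zero power_0_left)
qed

lemma sum_norm_weil_sum_squared:
  "(\<Sum>a\<in>UNIV. (cmod (weil_sum d (a::'a::{finite,field})))\<^sup>2) = CARD('a) ^ 2"
proof -
  have expand: "weil_sum d a * cnj (weil_sum d a)
      = (\<Sum>x\<in>UNIV. \<Sum>y\<in>UNIV. psi (x ^ d - y ^ d) * psi ((x - y) * a))" for a :: 'a
  proof -
    have "psi (x ^ d + a * x) * cnj (psi (y ^ d + a * y)) = psi (x ^ d - y ^ d) * psi ((x - y) * a)"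
      for x y :: 'a
      by (subst psi_diff[symmetric], subst psi_add[symmetric]) (simp add: algebra_simps)
    thus ?thesis unfolding weil_sum_def by (simp add: sum_product)
  qed
  have "(\<Sum>a\<in>UNIV. complex_of_real ((cmod (weil_sum d (a::'a)))\<^sup>2))
      = (\<Sum>a\<in>UNIV. \<Sum>x\<in>UNIV. \<Sum>y\<in>UNIV. psi (x ^ d - y ^ d) * psi ((x - y) * (a::'a)))"
    by (simp only: complex_norm_square expand)
  also have "\<dots> = (\<Sum>x\<in>UNIV. \<Sum>y\<in>UNIV. \<Sum>a\<in>UNIV. psi (x ^ d - y ^ d) * psi ((x - y) * (a::'a)))"
    by (subst sum.swap) (intro sum.cong refl sum.swap)
  also have "\<dots> = (\<Sum>x\<in>(UNIV::'a set). of_nat CARD('a))"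
    by (simp add: sum_distrib_left [symmetric] sum_psi_mult psi_zero if_distrib cong: if_cong)
  also have "\<dots> = of_real (CARD('a) ^ 2)"
    by (simp add: power2_eq_square)
  finally show ?thesis by (simp only: of_real_sum[symmetric] of_real_eq_iff)
qed

lemma norm_weil_sum_le: "cmod (weil_sum d (a::'a::{finite,field})) \<le> CARD('a)"
proof -
  have "cmod (weil_sum d a) \<le> (\<Sum>x\<in>UNIV. cmod (psi (x ^ d + a * x)))"
    unfolding weil_sum_def by (rule norm_sum)
  thus ?thesis by (simp add: norm_psi)
qed

lemma abs_trace_eq_if_Re_weil_sum_eq_card:
  fixes a :: "'a::{finite,field}"
  assumes "Re (weil_sum d a) = CARD('a)"
  shows "abs_trace (x ^ d) = abs_trace (- a * x)"
proof -
  have "(\<Sum>y\<in>UNIV. 1 - Re (psi (y ^ d + a * (y::'a)))) = 0"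
    using assms by (simp add: weil_sum_def sum_subtractf)
  moreover have "1 - Re (psi z) \<ge> 0" for z :: 'a
    using complex_Re_le_cmod[of "psi z"] by (simp add: norm_psi)
  ultimately have "Re (psi (x ^ d + a * x)) = 1"
    using sum_nonneg_eq_0_iff[of UNIV "\<lambda>y. 1 - Re (psi (y ^ d + a * y))"] by simp
  moreover from this have "Im (psi (x ^ d + a * x)) = 0"
    by (intro Im_eq_0) (simp add: norm_psi)
  ultimately have "psi (x ^ d + a * x) = 1"
    by (simp add: complex_eq_iff)
  hence "abs_trace (x ^ d) + abs_trace (a * x) = 0"
    using abs_trace_eq_0_if_psi_eq_1 abs_trace_add by metis
  thus ?thesis by (simp add: abs_trace_uminus eq_neg_iff_add_eq_0)
qed

lemma exists_eq_bound_if_sum_squares_eq: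
  fixes w :: "'b \<Rightarrow> real"
  assumes "finite A" and bounds: "\<And>a. a \<in> A \<Longrightarrow> 0 \<le> w a \<and> w a \<le> c"
    and sum: "(\<Sum>a\<in>A. w a) = c" and sum_squares: "(\<Sum>a\<in>A. (w a)\<^sup>2) = c\<^sup>2" and "c \<noteq> 0"
  shows "\<exists>a\<in>A. w a = c"
proof (rule ccontr)
  assume no_max: "\<not> ?thesis"
  have "(\<Sum>a\<in>A. w a * (c - w a)) = c * (\<Sum>a\<in>A. w a) - (\<Sum>a\<in>A. (w a)\<^sup>2)"
    by (simp add: algebra_simps power2_eq_square sum_subtractf sum_distrib_left)
  also have "\<dots> = 0" using sum sum_squares by (simp add: power2_eq_square)
  finally have "\<forall>a\<in>A. w a * (c - w a) = 0"
    using bounds by (subst sum_nonneg_eq_0_iff[OF \<open>finite A\<close>, symmetric]) auto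
  hence "\<forall>a\<in>A. w a = 0" using no_max by auto
  thus False using sum \<open>c \<noteq> 0\<close> by simp
qed

lemma exists_weil_sum_pos:
  assumes "coprime d (CARD('a::{finite,field}) - 1)" and "d > 0"
  shows "\<exists>a::'a. a \<noteq> 0 \<and> Re (weil_sum d a) > 0"
proof (rule ccontr)
  assume "\<not> ?thesis"
  hence "Re (weil_sum d a) \<le> 0" for a :: 'a
    using weil_sum_zero[OF assms] by (cases "a = 0") auto
  hence "(\<Sum>a\<in>UNIV. Re (weil_sum d (a::'a))) \<le> 0" by (intro sum_nonpos) auto
  thus False using arg_cong[OF sum_weil_sum[OF assms(2), where 'a='a], of Re] by simp
qed

lemma exists_weil_sum_neg:
  assumes "coprime d (CARD('a::{finite,field}) - 1)" and "d > 0" and "\<not> degenerate TYPE('a) d"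
  shows "\<exists>b::'a. b \<noteq> 0 \<and> Re (weil_sum d b) < 0"
proof (rule ccontr)
  assume no_neg: "\<not> ?thesis"
  define w where "w a = Re (weil_sum d a)" for a :: 'a
  have "w 0 = 0" using weil_sum_zero[OF assms(1,2)] by (simp add: w_def)
  have "0 \<le> w a \<and> w a \<le> CARD('a)" for a
    using no_neg \<open>w 0 = 0\<close> abs_Re_le_cmod[of "weil_sum d a"] norm_weil_sum_le[of d a]
    by (cases "a = 0") (auto simp: w_def)
  moreover have "(\<Sum>a\<in>UNIV. w a) = CARD('a)"
    using arg_cong[OF sum_weil_sum[OF assms(2), where 'a='a], of Re] by (simp add: w_def)
  moreover have "(\<Sum>a\<in>UNIV. (w a)\<^sup>2) = CARD('a) ^ 2"
    using sum_norm_weil_sum_squared[of d, where 'a='a] weil_sum_real[OF assms(1)]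
    by (simp add: w_def cmod_eq_Re complex_is_Real_iff)
  ultimately have "\<exists>a\<in>UNIV. w a = CARD('a)"
    by (intro exists_eq_bound_if_sum_squares_eq) auto
  then obtain a where "w a = CARD('a)" by blast
  hence "a \<noteq> 0" using \<open>w 0 = 0\<close> by auto
  moreover have "abs_trace (x ^ d) = abs_trace (- a * x)" for x
    using abs_trace_eq_if_Re_weil_sum_eq_card \<open>w a = CARD('a)\<close> by (simp add: w_def)
  ultimately show False
    using degenerate_if_abs_trace_power_eq_linear[of "- a" d] assms(3) by simp
qed

theorem corollary2p3:
  fixes d :: nat
  assumes "coprime d (CARD('a::{finite,field}) - 1)"
    and "\<not> degenerate (TYPE('a)) d"
  shows "\<exists>(a::'a) (b::'a). a \<noteq> 0 \<and> b \<noteq> 0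
           \<and> weil_sum d a \<in> \<real> \<and> Re (weil_sum d a) > 0
           \<and> weil_sum d b \<in> \<real> \<and> Re (weil_sum d b) < 0"
proof -
  have "d > 0"
    using assms card_ge_3_if_nondegenerate[OF assms(2)] by (cases d) auto
  obtain a :: 'a where "a \<noteq> 0" "Re (weil_sum d a) > 0"
    using exists_weil_sum_pos[OF assms(1) \<open>d > 0\<close>] by blast
  moreover obtain b :: 'a where "b \<noteq> 0" "Re (weil_sum d b) < 0"
    using exists_weil_sum_neg[OF assms(1) \<open>d > 0\<close> assms(2)] by blast
  ultimately show ?thesis using weil_sum_real[OF assms(1)] by blast
qed

end
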